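(* Let $(x_n)_{n\in\mathbb{N}}$ be a strictly increasing sequence of nonnegative reals with $x_0=0$, let $x_0!=1$, $x_n!=x_1\cdots x_n$, and suppose $\mathcal{N}(t)=\sum_{n\ge0}t^n/x_n!$ has radius of convergence $R=\lim_{n\to\infty}x_{n+1}\in(0,\infty]$. Suppose there is a probability density $w$ on $[0,R)$ with $x_n!=\int_0^R t^n w(t)\,dt$ for all $n\in\mathbb{N}$, and for real $\nu\geq 0$ define $x_\nu!=\int_0^R t^\nu w(t)\,dt$ (assumed finite). For $k\in\mathbb{N}$ and $0\le t<R$ set $$\mathcal{S}_k(t)=\frac{1}{\mathcal{N}(t)}\sum_{n=0}^{\infty}\frac{x_{\frac{k}{2}+n}!}{x_n!\,x_{n+k}!}\,t^{n+k/2}.$$ Then $\mathcal{S}_k(t)\le 1$ for all $k\in\mathbb{N}$ and all $0\le t<R$. *)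

theory Defs
  imports "HOL-Analysis.Analysis"
begin

definition xfact :: "(nat \<Rightarrow> real) \<Rightarrow> nat \<Rightarrow> real" where
  "xfact x n = (\<Prod>i=1..n. x i)"

definition Nfun :: "(nat \<Rightarrow> real) \<Rightarrow> real \<Rightarrow> real" where
  "Nfun x t = (\<Sum>n. t ^ n / xfact x n)"

definition gfact :: "ereal \<Rightarrow> (real \<Rightarrow> real) \<Rightarrow> real \<Rightarrow> real" where
  "gfact R w \<nu> = (LINT t:{t. 0 \<le> t \<and> ereal t < R}|lborel. t powr \<nu> * w t)"

text \<open>Terms of the series defining S_k(t); t^(n+k/2) is written t^n * (sqrt t)^k
  so that 0^0 = 1.\<close>
definition Sterm :: "(nat \<Rightarrow> real) \<Rightarrow> ereal \<Rightarrow> (real \<Rightarrow> real) \<Rightarrow> nat \<Rightarrow> real \<Rightarrow> nat \<Rightarrow> real" where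
  "Sterm x R w k t n =
     gfact R w (real k / 2 + real n) / (xfact x n * xfact x (n + k)) * (t ^ n * sqrt t ^ k)"

end

theory Submission
  imports Defs
begin

text \<open>
  For \<open>c = t powr (k/2) > 0\<close>, AM-GM gives pointwise
  \<open>s powr (n + k/2) \<le> c/2 * s^n + s^(n+k) / (2c)\<close>; integrating against \<open>w\<close>
  bounds \<open>x_(n+k/2)!\<close> by \<open>c/2 * x_n! + x_(n+k)! / (2c)\<close>. Hence the \<open>n\<close>-th term
  of the series for \<open>N(t) * S_k(t)\<close> is at most the mean of the \<open>n\<close>-th and
  \<open>(n+k)\<close>-th terms of the series for \<open>N(t)\<close>, and summing gives
  \<open>N(t) * S_k(t) \<le> N(t)\<close>.
\<close>

text \<open>Only an inequality, because \<open>0 powr 0 = 0\<close> while \<open>0 ^ 0 = 1\<close>.\<close>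
lemma powr_half_add_le:
  fixes s :: real
  assumes "0 \<le> s"
  shows "s powr (real k / 2 + real n) \<le> s ^ n * sqrt s ^ k"
proof (cases "s = 0")
  case False
  then have "s powr (real k / 2) = sqrt s ^ k"
    using assms by (simp add: powr_half_sqrt[symmetric] powr_power)
  then show ?thesis
    using assms False by (simp add: powr_add powr_realpow mult.commute)
qed simp

lemma le_am_gm_weighted:
  fixes c d :: real
  assumes "0 < c"
  shows "d \<le> c / 2 + d * d / (2 * c)"
proof -
  have "0 \<le> (c - d)\<^sup>2 / (2 * c)" using assms by simp
  also have "\<dots> = c / 2 + d * d / (2 * c) - d"
    using assms by (simp add: field_simps power2_eq_square)
  finally show ?thesis by simp
qed

lemma powr_half_add_le_am_gm:
  fixes s c :: real
  assumes "0 \<le> s" and "0 < c"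
  shows "s powr (real k / 2 + real n) \<le> c / 2 * s ^ n + 1 / (2 * c) * s ^ (n + k)"
proof -
  define d where "d = sqrt s ^ k"
  have "d * d = s ^ k"
    using assms(1) by (simp add: d_def power_mult_distrib[symmetric])
  have "s powr (real k / 2 + real n) \<le> s ^ n * d"
    unfolding d_def using assms(1) by (rule powr_half_add_le)
  also have "\<dots> \<le> s ^ n * (c / 2 + d * d / (2 * c))"
    using assms by (intro mult_left_mono le_am_gm_weighted) auto
  also have "\<dots> = c / 2 * s ^ n + 1 / (2 * c) * s ^ (n + k)"
    using \<open>d * d = s ^ k\<close> by (simp add: algebra_simps power_add)
  finally show ?thesis .
qed

lemma set_integral_powr_half_add_le:
  fixes M :: "real measure" and w :: "real \<Rightarrow> real" and c :: real
  assumes "0 < c"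
    and A_nonneg: "\<And>s. s \<in> A \<Longrightarrow> 0 \<le> s"
    and w_nonneg: "\<And>s. s \<in> A \<Longrightarrow> 0 \<le> w s"
    and "set_integrable M A (\<lambda>s. s powr (real k / 2 + real n) * w s)"
    and moments_int: "\<And>m::nat. set_integrable M A (\<lambda>s. s ^ m * w s)"
  shows "(LINT s:A|M. s powr (real k / 2 + real n) * w s)
           \<le> c / 2 * (LINT s:A|M. s ^ n * w s) + 1 / (2 * c) * (LINT s:A|M. s ^ (n + k) * w s)"
proof -
  have "(LINT s:A|M. s powr (real k / 2 + real n) * w s)
          \<le> (LINT s:A|M. c / 2 * (s ^ n * w s) + 1 / (2 * c) * (s ^ (n + k) * w s))"
  proof (rule set_integral_mono)
    show "set_integrable M A (\<lambda>s. c / 2 * (s ^ n * w s) + 1 / (2 * c) * (s ^ (n + k) * w s))"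
      using moments_int by (intro set_integral_add set_integrable_mult_right)
  next
    fix s assume "s \<in> A"
    then show "s powr (real k / 2 + real n) * w s \<le> c / 2 * (s ^ n * w s) + 1 / (2 * c) * (s ^ (n + k) * w s)"
      using powr_half_add_le_am_gm[OF A_nonneg \<open>0 < c\<close>, of s k n] w_nonneg[of s]
      by (auto simp: algebra_simps dest: mult_right_mono)
  qed fact
  also have "\<dots> = c / 2 * (LINT s:A|M. s ^ n * w s) + 1 / (2 * c) * (LINT s:A|M. s ^ (n + k) * w s)"
    using moments_int by (simp add: set_integral_add set_integrable_mult_right set_integral_mult_right)
  finally show ?thesis .
qed

lemma summable_suminf_le_of_le_mean_shift:
  fixes f g :: "nat \<Rightarrow> real"
  assumes "summable f" and f_nonneg: "\<And>n. 0 \<le> f n"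
    and g_nonneg: "\<And>n. 0 \<le> g n" and g_le: "\<And>n. g n \<le> (f n + f (n + k)) / 2"
  shows "summable g \<and> suminf g \<le> suminf f"
proof -
  have mean_sums: "(\<lambda>n. (f n + f (n + k)) / 2) sums ((suminf f + (\<Sum>n. f (n + k))) / 2)"
    using assms(1) by (intro sums_divide sums_add summable_sums summable_ignore_initial_segment)
  have "summable g"
    using mean_sums g_nonneg g_le by (intro summable_comparison_test'[OF sums_summable]) auto
  have "suminf g \<le> (suminf f + (\<Sum>n. f (n + k))) / 2"
    using suminf_le[OF g_le \<open>summable g\<close> sums_summable[OF mean_sums]] sums_unique[OF mean_sums]
    by simp
  also have "\<dots> \<le> suminf f"
    using suminf_split_initial_segment[OF assms(1), of k] sum_nonneg[of "{..<k}" f] f_nonneg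
    by simp
  finally show ?thesis using \<open>summable g\<close> by simp
qed

lemma xfact_pos:
  assumes "strict_mono x" and "x 0 = 0"
  shows "0 < xfact x n"
proof -
  have "0 < x i" if "1 \<le> i" for i
    using strict_monoD[OF assms(1), of 0 i] that assms(2) by simp
  then show ?thesis unfolding xfact_def by (intro prod_pos) auto
qed

lemma gfact_nonneg:
  assumes "\<And>t. 0 \<le> t \<Longrightarrow> ereal t < R \<Longrightarrow> 0 \<le> w t"
  shows "0 \<le> gfact R w \<nu>"
  unfolding gfact_def set_lebesgue_integral_def
  by (rule Bochner_Integration.integral_nonneg) (auto simp: assms split: split_indicator)

lemma Sterm_le_mean:
  assumes xfact_pos: "\<And>n. 0 < xfact x n" and "0 \<le> t"
    and w_nonneg: "\<And>t. 0 \<le> t \<Longrightarrow> ereal t < R \<Longrightarrow> 0 \<le> w t"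
    and moments_int: "\<And>n::nat. set_integrable lborel {t. 0 \<le> t \<and> ereal t < R} (\<lambda>t. t ^ n * w t)"
    and moments: "\<And>n::nat. xfact x n = (LINT t:{t. 0 \<le> t \<and> ereal t < R}|lborel. t ^ n * w t)"
    and real_moments_int: "\<And>\<nu>::real. 0 \<le> \<nu> \<Longrightarrow>
          set_integrable lborel {t. 0 \<le> t \<and> ereal t < R} (\<lambda>t. t powr \<nu> * w t)"
  shows "Sterm x R w k t n \<le> (t ^ n / xfact x n + t ^ (n + k) / xfact x (n + k)) / 2"
proof (cases "t = 0 \<and> 0 < k")
  case True
  then show ?thesis using xfact_pos[of n] xfact_pos[of "n + k"] by (simp add: Sterm_def zero_power)
next
  case False
  define c where "c = sqrt t ^ k"
  have "0 < c" using False \<open>0 \<le> t\<close> by (auto simp: c_def)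
  have "c * c = t ^ k"
    using \<open>0 \<le> t\<close> by (simp add: c_def power_mult_distrib[symmetric])
  have gfact_le: "gfact R w (real k / 2 + real n)
                    \<le> c / 2 * xfact x n + 1 / (2 * c) * xfact x (n + k)"
    unfolding gfact_def moments
    using \<open>0 < c\<close> w_nonneg moments_int real_moments_int[of "real k / 2 + real n"]
    by (intro set_integral_powr_half_add_le) auto
  have "Sterm x R w k t n = gfact R w (real k / 2 + real n) * (t ^ n * c / (xfact x n * xfact x (n + k)))"
    by (simp add: Sterm_def c_def)
  also have "\<dots> \<le> (c / 2 * xfact x n + 1 / (2 * c) * xfact x (n + k)) * (t ^ n * c / (xfact x n * xfact x (n + k)))"
    using gfact_le \<open>0 \<le> t\<close> \<open>0 < c\<close> xfact_pos
    by (intro mult_right_mono divide_nonneg_pos mult_pos_pos mult_nonneg_nonneg) auto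
  also have "\<dots> = (t ^ n / xfact x n + t ^ (n + k) / xfact x (n + k)) / 2"
    using \<open>0 < c\<close> \<open>c * c = t ^ k\<close> xfact_pos[of n] xfact_pos[of "n + k"]
    by (simp add: field_simps power_add)
  finally show ?thesis .
qed

theorem mainTheorem3:
  fixes x :: "nat \<Rightarrow> real" and w :: "real \<Rightarrow> real" and R :: ereal
  assumes mono: "strict_mono x"
    and x0: "x 0 = 0"
    and nonneg: "\<And>n. 0 \<le> x n"
    and Rlim: "(\<lambda>n. ereal (x (Suc n))) \<longlonglongrightarrow> R"
    and Rpos: "0 < R"
    and radius: "conv_radius (\<lambda>n. 1 / xfact x n) = R"
    and w_meas: "w \<in> borel_measurable lborel"
    and w_nonneg: "\<And>t. 0 \<le> t \<Longrightarrow> ereal t < R \<Longrightarrow> 0 \<le> w t"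
    and w_int: "set_integrable lborel {t. 0 \<le> t \<and> ereal t < R} w"
    and w_prob: "(LINT t:{t. 0 \<le> t \<and> ereal t < R}|lborel. w t) = 1"
    and moments_int: "\<And>n::nat. set_integrable lborel {t. 0 \<le> t \<and> ereal t < R} (\<lambda>t. t ^ n * w t)"
    and moments: "\<And>n::nat. xfact x n = (LINT t:{t. 0 \<le> t \<and> ereal t < R}|lborel. t ^ n * w t)"
    and real_moments_int: "\<And>\<nu>::real. 0 \<le> \<nu> \<Longrightarrow>
          set_integrable lborel {t. 0 \<le> t \<and> ereal t < R} (\<lambda>t. t powr \<nu> * w t)"
  shows "\<forall>k::nat. \<forall>t::real. 0 \<le> t \<and> ereal t < R \<longrightarrow>
           summable (Sterm x R w k t) \<and> (\<Sum>n. Sterm x R w k t n) / Nfun x t \<le> 1"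
proof (intro allI impI)
  fix k :: nat and t :: real
  assume t: "0 \<le> t \<and> ereal t < R"
  define f where "f = (\<lambda>n. t ^ n / xfact x n)"
  have xfact_pos: "0 < xfact x n" for n using mono x0 by (rule xfact_pos)
  have f_nonneg: "0 \<le> f n" for n using t xfact_pos[of n] by (simp add: f_def)
  have "summable (\<lambda>n. 1 / xfact x n * t ^ n)"
    using t radius by (intro summable_in_conv_radius) simp
  then have "summable f" by (simp add: f_def)
  have "summable (Sterm x R w k t) \<and> (\<Sum>n. Sterm x R w k t n) \<le> suminf f"
  proof (rule summable_suminf_le_of_le_mean_shift[OF \<open>summable f\<close> f_nonneg])
    have "0 \<le> gfact R w \<nu>" for \<nu> using w_nonneg by (rule gfact_nonneg)
    then show "0 \<le> Sterm x R w k t n" for n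
      using xfact_pos t unfolding Sterm_def
      by (intro mult_nonneg_nonneg divide_nonneg_pos mult_pos_pos) auto
    show "Sterm x R w k t n \<le> (f n + f (n + k)) / 2" for n
      unfolding f_def using xfact_pos t w_nonneg moments_int moments real_moments_int
      by (intro Sterm_le_mean) auto
  qed
  moreover have "1 \<le> suminf f"
    using sum_le_suminf[OF \<open>summable f\<close>, of "{0}"] f_nonneg by (simp add: f_def xfact_def)
  moreover have "Nfun x t = suminf f" by (simp add: Nfun_def f_def)
  ultimately show "summable (Sterm x R w k t) \<and> (\<Sum>n. Sterm x R w k t n) / Nfun x t \<le> 1"
    by (simp add: divide_le_eq)
qed

end
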